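(* Consider only finite-dimensional Hilbert spaces $E$ (i.e. $E=\mathbb{C}^n$, $n\geq1$). Let $(D(E))$ be a free set with $D(E)\subseteq\mathcal{B}(E)^k$ such that each $D(E)$ contains an open neighborhood of $0$, and let $F:D(E)\to\mathcal{B}(E)$ be a free function which is complex-linear, i.e. $F(\alpha X+\beta Y)=\alpha F(X)+\beta F(Y)$ whenever $\alpha,\beta\in\mathbb{C}$ and $X,Y,\alpha X+\beta Y\in D(E)$. Then there exist $a_1,\dots,a_k\in\mathbb{C}$ (independent of $E$) such that $$F(X)=\sum_{j=1}^k a_jX_j\qquad\text{for all } X\in D(E)\text{ and all } E.$$
   Context: $\mathcal{B}(E)$: linear operators on $E$. A free set is a collection $(D(E))$ with $U^*D(E)U\subseteq D(K)$ for unitaries $U:K\to E$ (where $U^*XU=(U^*X_1U,\dots,U^*X_kU)$) and $D(E)\oplus D(K)\subseteq D(E\oplus K)$. A free function $F:D(E)\to\mathcal{B}(E)$ satisfies $F(U^*A_1U,\dots,U^*A_kU)=U^*F(A)U$ for unitaries $U$ and $F(A_1\oplus B_1,\dots,A_k\oplus B_k)=F(A)\oplus F(B)$. *)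

theory Defs
  imports Complex_Main "Jordan_Normal_Form.Matrix"
begin

text \<open>Operators on the Hilbert space C^n are represented as n x n complex matrices.
  A k-tuple of operators is a list of length k of n x n matrices.\<close>

definition adj :: "complex mat \<Rightarrow> complex mat" where
  "adj U = mat (dim_col U) (dim_row U) (\<lambda>(i,j). cnj (U $$ (j,i)))"

definition unitary_mat :: "nat \<Rightarrow> complex mat \<Rightarrow> bool" where
  "unitary_mat n U \<longleftrightarrow> U \<in> carrier_mat n n \<and> adj U * U = 1\<^sub>m n \<and> U * adj U = 1\<^sub>m n"

definition tuples :: "nat \<Rightarrow> nat \<Rightarrow> complex mat list set" where
  "tuples k n = {X. length X = k \<and> (\<forall>i<k. X ! i \<in> carrier_mat n n)}"

definition conj_tuple :: "complex mat \<Rightarrow> complex mat list \<Rightarrow> complex mat list" where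
  "conj_tuple U X = map (\<lambda>A. adj U * A * U) X"

definition dsum :: "complex mat \<Rightarrow> complex mat \<Rightarrow> complex mat" where
  "dsum A B = four_block_mat A (0\<^sub>m (dim_row A) (dim_col B)) (0\<^sub>m (dim_row B) (dim_col A)) B"

definition dsum_tuple :: "complex mat list \<Rightarrow> complex mat list \<Rightarrow> complex mat list" where
  "dsum_tuple X Y = map2 dsum X Y"

definition lin_comb_tuple :: "complex \<Rightarrow> complex mat list \<Rightarrow> complex \<Rightarrow> complex mat list \<Rightarrow> complex mat list" where
  "lin_comb_tuple \<alpha> X \<beta> Y = map2 (\<lambda>A B. \<alpha> \<cdot>\<^sub>m A + \<beta> \<cdot>\<^sub>m B) X Y"

definition free_set :: "nat \<Rightarrow> (nat \<Rightarrow> complex mat list set) \<Rightarrow> bool" where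
  "free_set k D \<longleftrightarrow>
     (\<forall>n\<ge>1. D n \<subseteq> tuples k n) \<and>
     (\<forall>n\<ge>1. \<forall>U X. unitary_mat n U \<longrightarrow> X \<in> D n \<longrightarrow> conj_tuple U X \<in> D n) \<and>
     (\<forall>n\<ge>1. \<forall>m\<ge>1. \<forall>X Y. X \<in> D n \<longrightarrow> Y \<in> D m \<longrightarrow> dsum_tuple X Y \<in> D (n + m))"

text \<open>D n contains an open neighbourhood of 0 in B(C^n)^k (all norms equivalent:
  use the max-entry norm).\<close>
definition contains_nbhd_0 :: "nat \<Rightarrow> (nat \<Rightarrow> complex mat list set) \<Rightarrow> bool" where
  "contains_nbhd_0 k D \<longleftrightarrow>
     (\<forall>n\<ge>1. \<exists>\<epsilon>>0. \<forall>X\<in>tuples k n.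
        (\<forall>i<k. \<forall>r<n. \<forall>c<n. cmod (X ! i $$ (r,c)) < \<epsilon>) \<longrightarrow> X \<in> D n)"

definition free_function :: "nat \<Rightarrow> (nat \<Rightarrow> complex mat list set) \<Rightarrow> (nat \<Rightarrow> complex mat list \<Rightarrow> complex mat) \<Rightarrow> bool" where
  "free_function k D F \<longleftrightarrow>
     (\<forall>n\<ge>1. \<forall>X\<in>D n. F n X \<in> carrier_mat n n) \<and>
     (\<forall>n\<ge>1. \<forall>U X. unitary_mat n U \<longrightarrow> X \<in> D n \<longrightarrow> F n (conj_tuple U X) = adj U * F n X * U) \<and>
     (\<forall>n\<ge>1. \<forall>m\<ge>1. \<forall>X Y. X \<in> D n \<longrightarrow> Y \<in> D m \<longrightarrow> F (n + m) (dsum_tuple X Y) = dsum (F n X) (F m Y))"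

definition complex_linear_on :: "(nat \<Rightarrow> complex mat list set) \<Rightarrow> (nat \<Rightarrow> complex mat list \<Rightarrow> complex mat) \<Rightarrow> bool" where
  "complex_linear_on D F \<longleftrightarrow>
     (\<forall>n\<ge>1. \<forall>\<alpha> \<beta> X Y. X \<in> D n \<longrightarrow> Y \<in> D n \<longrightarrow> lin_comb_tuple \<alpha> X \<beta> Y \<in> D n \<longrightarrow>
        F n (lin_comb_tuple \<alpha> X \<beta> Y) = \<alpha> \<cdot>\<^sub>m F n X + \<beta> \<cdot>\<^sub>m F n Y)"

end

theory Submission
  imports Defs
begin

text \<open>
  Fix a coordinate j and a size n. The matrices M for which F agrees with the linear form
  \<open>X \<mapsto> \<Sum>j a\<^sub>j X\<^sub>j\<close> on the tuple having M in coordinate j and zeros elsewhere form, by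
  linearity and unitary invariance of F, a unitarily invariant subspace of \<open>M\<^sub>n(\<complex>)\<close>. Such a
  subspace containing the matrix unit \<open>E\<^sub>0\<^sub>0\<close> is everything: conjugating \<open>E\<^sub>s\<^sub>s\<close> by a Hadamard
  rotation in the (r,s)-plane and then by diagonal phases yields \<open>E\<^sub>r\<^sub>r\<close> and \<open>E\<^sub>r\<^sub>s\<close> as linear
  combinations. The coefficients \<open>a\<^sub>j\<close> are read off for n = 1, and since \<open>E\<^sub>0\<^sub>0\<close> of size 1 + m is
  the direct sum of the 1 \<times> 1 identity and the zero matrix, compatibility with direct sums
  carries them to every n.

  F is only known to be linear where all tuples involved lie in D n, so agreement is tracked
  along rays \<open>{t X}\<close>: every ray meets the neighbourhood of 0 contained in D n at some t \<noteq> 0.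
\<close>

lemma index_mult_mat_sum:
  assumes "A \<in> carrier_mat n m" "B \<in> carrier_mat m p" "a < n" "b < p"
  shows "(A * B) $$ (a,b) = (\<Sum>l<m. A $$ (a,l) * B $$ (l,b))"
  using assms by (auto simp: scalar_prod_def lessThan_atLeast0 intro!: sum.cong)

lemma adj_carrier_mat [simp]: "U \<in> carrier_mat n m \<Longrightarrow> adj U \<in> carrier_mat m n"
  by (auto simp: adj_def)

lemma index_adj [simp]:
  "a < dim_col U \<Longrightarrow> b < dim_row U \<Longrightarrow> adj U $$ (a,b) = cnj (U $$ (b,a))"
  "dim_row (adj U) = dim_col U" "dim_col (adj U) = dim_row U"
  by (auto simp: adj_def)

lemma index_conj_mat:
  assumes "U \<in> carrier_mat n n" "M \<in> carrier_mat n n" "a < n" "b < n"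
  shows "(adj U * M * U) $$ (a,b) = (\<Sum>p<n. \<Sum>q<n. cnj (U $$ (p,a)) * M $$ (p,q) * U $$ (q,b))"
proof -
  have "(adj U * M * U) $$ (a,b) = (\<Sum>q<n. (adj U * M) $$ (a,q) * U $$ (q,b))"
    using assms by (intro index_mult_mat_sum) auto
  also have "\<dots> = (\<Sum>q<n. \<Sum>p<n. cnj (U $$ (p,a)) * M $$ (p,q) * U $$ (q,b))"
  proof (rule sum.cong[OF refl])
    fix q assume "q \<in> {..<n}"
    then have "(adj U * M) $$ (a,q) = (\<Sum>p<n. cnj (U $$ (p,a)) * M $$ (p,q))"
      using assms by (subst index_mult_mat_sum[of _ n n _ n]) auto
    then show "(adj U * M) $$ (a,q) * U $$ (q,b) = (\<Sum>p<n. cnj (U $$ (p,a)) * M $$ (p,q) * U $$ (q,b))"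
      by (simp add: sum_distrib_right)
  qed
  finally show ?thesis by (rule trans) (rule sum.swap)
qed

definition mat_unit :: "nat \<Rightarrow> nat \<Rightarrow> nat \<Rightarrow> complex mat" where
  "mat_unit n r s = mat n n (\<lambda>(a,b). if a = r \<and> b = s then 1 else 0)"

lemma mat_unit_carrier [simp]: "mat_unit n r s \<in> carrier_mat n n"
  by (simp add: mat_unit_def)

lemma index_mat_unit [simp]:
  "a < n \<Longrightarrow> b < n \<Longrightarrow> mat_unit n r s $$ (a,b) = (if a = r \<and> b = s then 1 else 0)"
  "dim_row (mat_unit n r s) = n" "dim_col (mat_unit n r s) = n"
  by (auto simp: mat_unit_def)

lemma conj_mat_unit:
  assumes U: "U \<in> carrier_mat n n" and s: "s < n"
  shows "adj U * mat_unit n s s * U = mat n n (\<lambda>(a,b). cnj (U $$ (s,a)) * U $$ (s,b))"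
proof (rule eq_matI)
  fix a b assume "a < dim_row (mat n n (\<lambda>(a,b). cnj (U $$ (s,a)) * U $$ (s,b)))"
    "b < dim_col (mat n n (\<lambda>(a,b). cnj (U $$ (s,a)) * U $$ (s,b)))"
  then have ab: "a < n" "b < n" by auto
  have "(adj U * mat_unit n s s * U) $$ (a,b)
      = (\<Sum>p<n. \<Sum>q<n. if p = s \<and> q = s then cnj (U $$ (s,a)) * U $$ (s,b) else 0)"
    unfolding index_conj_mat[OF U mat_unit_carrier ab]
    by (intro sum.cong[OF refl]) simp
  also have "\<dots> = cnj (U $$ (s,a)) * U $$ (s,b)"
  proof -
    have "(\<Sum>q<n. if p = s \<and> q = s then cnj (U $$ (s,a)) * U $$ (s,b) else 0)
        = (if p = s then cnj (U $$ (s,a)) * U $$ (s,b) else 0)" for p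
      using s by (cases "p = s") simp_all
    then show ?thesis using s by simp
  qed
  finally show "(adj U * mat_unit n s s * U) $$ (a,b) = mat n n (\<lambda>(a,b). cnj (U $$ (s,a)) * U $$ (s,b)) $$ (a,b)"
    using ab by simp
qed (use U in auto)

lemma adj_mat_diag: "adj (mat_diag n u) = mat_diag n (\<lambda>i. cnj (u i))"
  by (rule eq_matI) (auto simp: mat_diag_def)

lemma conj_mat_diag:
  assumes "M \<in> carrier_mat n n"
  shows "adj (mat_diag n u) * M * mat_diag n u = mat n n (\<lambda>(a,b). cnj (u a) * M $$ (a,b) * u b)"
  using assms by (simp add: adj_mat_diag mat_diag_mult_left mat_diag_mult_right[of _ n n])
    (rule eq_matI, simp_all)

lemma unitary_mat_diag:
  assumes "\<And>i. i < n \<Longrightarrow> cmod (u i) = 1"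
  shows "unitary_mat n (mat_diag n u)"
proof -
  have unit: "u i * cnj (u i) = 1" "cnj (u i) * u i = 1" if "i < n" for i
    using assms[OF that] complex_norm_square[of "u i"] by (simp_all add: mult.commute)
  have "mat_diag n (\<lambda>i. cnj (u i) * u i) = 1\<^sub>m n" "mat_diag n (\<lambda>i. u i * cnj (u i)) = 1\<^sub>m n"
    by (auto simp: mat_diag_def unit)
  then show ?thesis by (simp add: unitary_mat_def adj_mat_diag)
qed

definition hadamard_mat :: "nat \<Rightarrow> nat \<Rightarrow> nat \<Rightarrow> complex mat" where
  "hadamard_mat n r s = mat n n (\<lambda>(a,b).
     if a \<in> {r,s} \<and> b \<in> {r,s} then (if a = s \<and> b = s then - 1 else 1) / sqrt 2
     else if a = b then 1 else 0)"

lemma hadamard_mat_carrier [simp]: "hadamard_mat n r s \<in> carrier_mat n n"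
  by (simp add: hadamard_mat_def)

lemma index_hadamard_mat:
  "a < n \<Longrightarrow> b < n \<Longrightarrow> hadamard_mat n r s $$ (a,b) =
     (if a \<in> {r,s} \<and> b \<in> {r,s} then (if a = s \<and> b = s then - 1 else 1) / sqrt 2
      else if a = b then 1 else 0)"
  "dim_row (hadamard_mat n r s) = n" "dim_col (hadamard_mat n r s) = n"
  by (simp_all add: hadamard_mat_def)

lemma of_real_sqrt2_square [simp]: "complex_of_real (sqrt 2) * complex_of_real (sqrt 2) = 2"
  by (simp flip: of_real_mult)

lemma adj_hadamard_mat: "adj (hadamard_mat n r s) = hadamard_mat n r s"
  by (rule eq_matI) (auto simp: index_hadamard_mat)

lemma hadamard_mat_square:
  assumes rs: "r \<noteq> s" "r < n" "s < n"
  shows "hadamard_mat n r s * hadamard_mat n r s = 1\<^sub>m n"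
proof (rule eq_matI)
  let ?H = "hadamard_mat n r s"
  fix a b assume "a < dim_row (1\<^sub>m n :: complex mat)" "b < dim_col (1\<^sub>m n :: complex mat)"
  then have ab: "a < n" "b < n" by auto
  have prod: "(?H * ?H) $$ (a,b) = (\<Sum>l<n. ?H $$ (a,l) * ?H $$ (l,b))"
    using ab by (intro index_mult_mat_sum) auto
  show "(?H * ?H) $$ (a,b) = 1\<^sub>m n $$ (a,b)"
  proof (cases "a \<in> {r,s}")
    case False
    then have "(\<Sum>l<n. ?H $$ (a,l) * ?H $$ (l,b)) = (\<Sum>l<n. if l = a then ?H $$ (a,b) else 0)"
      using ab by (intro sum.cong refl) (auto simp: index_hadamard_mat)
    then show ?thesis using prod ab False by (auto simp: index_hadamard_mat)
  next
    case True
    have "(\<Sum>l<n. ?H $$ (a,l) * ?H $$ (l,b)) = (\<Sum>l\<in>{r,s}. ?H $$ (a,l) * ?H $$ (l,b))"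
      using True ab rs by (intro sum.mono_neutral_right) (auto simp: index_hadamard_mat)
    moreover have "(\<Sum>l\<in>{r,s}. ?H $$ (a,l) * ?H $$ (l,b)) = 1\<^sub>m n $$ (a,b)"
      using True ab rs by (auto simp: index_hadamard_mat)
    ultimately show ?thesis using prod by simp
  qed
qed (auto simp: index_hadamard_mat)

lemma unitary_hadamard_mat: "r \<noteq> s \<Longrightarrow> r < n \<Longrightarrow> s < n \<Longrightarrow> unitary_mat n (hadamard_mat n r s)"
  by (simp add: unitary_mat_def adj_hadamard_mat hadamard_mat_square)

definition unitarily_invariant_subspace :: "nat \<Rightarrow> complex mat set \<Rightarrow> bool" where
  "unitarily_invariant_subspace n S \<longleftrightarrow> S \<subseteq> carrier_mat n n \<and>
     (\<forall>A\<in>S. \<forall>B\<in>S. \<forall>\<alpha> \<beta>. \<alpha> \<cdot>\<^sub>m A + \<beta> \<cdot>\<^sub>m B \<in> S) \<and>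
     (\<forall>U. \<forall>A\<in>S. unitary_mat n U \<longrightarrow> adj U * A * U \<in> S)"

lemma unitarily_invariant_subspaceD:
  assumes "unitarily_invariant_subspace n S"
  shows "A \<in> S \<Longrightarrow> A \<in> carrier_mat n n"
    and "A \<in> S \<Longrightarrow> B \<in> S \<Longrightarrow> \<alpha> \<cdot>\<^sub>m A + \<beta> \<cdot>\<^sub>m B \<in> S"
    and "unitary_mat n U \<Longrightarrow> A \<in> S \<Longrightarrow> adj U * A * U \<in> S"
  using assms by (auto simp: unitarily_invariant_subspace_def)

lemma unitarily_invariant_subspace_mat_unit:
  assumes S: "unitarily_invariant_subspace n S" and Ess: "mat_unit n s s \<in> S"
    and rs: "r \<noteq> s" "r < n" "s < n"
  shows "mat_unit n r r \<in> S" "mat_unit n r s \<in> S"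
proof -
  let ?H = "hadamard_mat n r s"
  define w :: "nat \<Rightarrow> complex" where "w a = (if a = r then 1 else if a = s then - 1 else 0) / sqrt 2" for a
  define \<sigma> :: "nat \<Rightarrow> complex" where "\<sigma> a = (if a = s then - 1 else 1)" for a
  define \<iota> :: "nat \<Rightarrow> complex" where "\<iota> a = (if a = s then \<i> else 1)" for a
  \<comment> \<open>\<open>A = (E\<^sub>r\<^sub>r - E\<^sub>r\<^sub>s - E\<^sub>s\<^sub>r + E\<^sub>s\<^sub>s) / 2\<close>; B and C flip the sign, resp. rotate the phase,
    of its off-diagonal entries.\<close>
  define A where "A = adj ?H * mat_unit n s s * ?H"
  define B where "B = adj (mat_diag n \<sigma>) * A * mat_diag n \<sigma>"
  define C where "C = adj (mat_diag n \<iota>) * A * mat_diag n \<iota>"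
  have A_eq: "A = mat n n (\<lambda>(a,b). w a * w b)"
    unfolding A_def using rs by (subst conj_mat_unit) (auto simp: index_hadamard_mat w_def)
  have B_eq: "B = mat n n (\<lambda>(a,b). cnj (\<sigma> a) * (w a * w b) * \<sigma> b)"
    unfolding B_def A_eq by (subst conj_mat_diag) auto
  have C_eq: "C = mat n n (\<lambda>(a,b). cnj (\<iota> a) * (w a * w b) * \<iota> b)"
    unfolding C_def A_eq by (subst conj_mat_diag) auto
  have "A \<in> S"
    unfolding A_def using rs by (intro unitarily_invariant_subspaceD(3)[OF S] unitary_hadamard_mat Ess)
  moreover have "B \<in> S" "C \<in> S"
    unfolding B_def C_def using \<open>A \<in> S\<close>
    by (auto intro!: unitarily_invariant_subspaceD(3)[OF S] unitary_mat_diag simp: \<sigma>_def \<iota>_def)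
  moreover have "mat_unit n r r = 1 \<cdot>\<^sub>m (1 \<cdot>\<^sub>m A + 1 \<cdot>\<^sub>m B) + (- 1) \<cdot>\<^sub>m mat_unit n s s"
    using rs by (auto simp: A_eq B_eq w_def \<sigma>_def)
  moreover have "mat_unit n r s = \<i> \<cdot>\<^sub>m C + 1 \<cdot>\<^sub>m ((- (1 + \<i>) / 2) \<cdot>\<^sub>m A + ((1 - \<i>) / 2) \<cdot>\<^sub>m B)"
    using rs by (auto simp: A_eq B_eq C_eq w_def \<sigma>_def \<iota>_def field_simps)
  ultimately show "mat_unit n r r \<in> S" "mat_unit n r s \<in> S"
    using Ess by (metis unitarily_invariant_subspaceD(2)[OF S])+
qed

lemma unitarily_invariant_subspace_eq_carrier_mat:
  assumes S: "unitarily_invariant_subspace n S" and E00: "mat_unit n 0 0 \<in> S"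
  shows "S = carrier_mat n n"
proof
  have diag: "mat_unit n r r \<in> S" if "r < n" for r
    using unitarily_invariant_subspace_mat_unit(1)[OF S E00 _ that] E00 that by (cases "r = 0") auto
  have units: "mat_unit n r s \<in> S" if "r < n" "s < n" for r s
    using unitarily_invariant_subspace_mat_unit(2)[OF S diag] diag that by (cases "r = s") auto
  show "carrier_mat n n \<subseteq> S"
  proof
    fix M :: "complex mat" assume M: "M \<in> carrier_mat n n"
    define restrict where "restrict P = mat n n (\<lambda>p. if p \<in> P then M $$ p else 0)" for P
    have "restrict P \<in> S" if "finite P" "P \<subseteq> {..<n} \<times> {..<n}" for P
      using that
    proof (induction P rule: finite_subset_induct)
      case empty
      have "restrict {} = 0 \<cdot>\<^sub>m mat_unit n 0 0 + 0 \<cdot>\<^sub>m mat_unit n 0 0"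
        by (auto simp: restrict_def)
      then show ?case using unitarily_invariant_subspaceD(2)[OF S E00 E00] by simp
    next
      case (insert p P)
      obtain r s where p: "p = (r,s)" "r < n" "s < n" using insert(2) by auto
      have "restrict (insert p P) = 1 \<cdot>\<^sub>m restrict P + M $$ p \<cdot>\<^sub>m mat_unit n r s"
        using insert(3) p by (auto simp: restrict_def)
      then show ?case using unitarily_invariant_subspaceD(2)[OF S insert(4) units[OF p(2,3)]] by simp
    qed
    moreover have "restrict ({..<n} \<times> {..<n}) = M"
      using M by (auto simp: restrict_def)
    ultimately show "M \<in> S" by force
  qed
qed (use S in \<open>auto dest: unitarily_invariant_subspaceD(1)\<close>)

definition coord_tuple :: "nat \<Rightarrow> nat \<Rightarrow> nat \<Rightarrow> complex mat \<Rightarrow> complex mat list" where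
  "coord_tuple k n j M = map (\<lambda>i. if i = j then M else 0\<^sub>m n n) [0..<k]"

lemma length_coord_tuple [simp]: "length (coord_tuple k n j M) = k"
  by (simp add: coord_tuple_def)

lemma nth_coord_tuple [simp]: "i < k \<Longrightarrow> coord_tuple k n j M ! i = (if i = j then M else 0\<^sub>m n n)"
  by (simp add: coord_tuple_def)

lemma coord_tuple_zero: "coord_tuple k n j (0\<^sub>m n n) = replicate k (0\<^sub>m n n)"
  by (simp add: coord_tuple_def map_replicate_const)

lemma coord_tuple_tuples: "M \<in> carrier_mat n n \<Longrightarrow> coord_tuple k n j M \<in> tuples k n"
  by (simp add: tuples_def)

lemma lin_comb_coord_tuple:
  assumes "A \<in> carrier_mat n n" "B \<in> carrier_mat n n"
  shows "lin_comb_tuple \<alpha> (coord_tuple k n j A) \<beta> (coord_tuple k n j B)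
       = coord_tuple k n j (\<alpha> \<cdot>\<^sub>m A + \<beta> \<cdot>\<^sub>m B)"
  by (rule nth_equalityI) (auto simp: lin_comb_tuple_def)

lemma conj_coord_tuple:
  assumes "U \<in> carrier_mat n n"
  shows "conj_tuple U (coord_tuple k n j M) = coord_tuple k n j (adj U * M * U)"
  using assms by (intro nth_equalityI) (auto simp: conj_tuple_def)

lemma index_dsum:
  assumes "A \<in> carrier_mat n n" "B \<in> carrier_mat m m" "r < n + m" "c < n + m"
  shows "dsum A B $$ (r,c) =
    (if r < n \<and> c < n then A $$ (r,c) else if n \<le> r \<and> n \<le> c then B $$ (r - n, c - n) else 0)"
  using assms by (auto simp: dsum_def)

lemma dsum_coord_tuple:
  assumes "A \<in> carrier_mat n n" "B \<in> carrier_mat m m"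
  shows "dsum_tuple (coord_tuple k n j A) (coord_tuple k m j B) = coord_tuple k (n + m) j (dsum A B)"
proof -
  have "dsum (0\<^sub>m n n) (0\<^sub>m m m) = 0\<^sub>m (n + m) (n + m)"
    by (rule eq_matI) (auto simp: dsum_def)
  then show ?thesis by (intro nth_equalityI) (auto simp: dsum_tuple_def)
qed

lemma tuple_subspace_eq_tuples:
  assumes sub: "T \<subseteq> tuples k n" and zero: "replicate k (0\<^sub>m n n) \<in> T"
    and lin: "\<And>X Y \<alpha> \<beta>. X \<in> T \<Longrightarrow> Y \<in> T \<Longrightarrow> lin_comb_tuple \<alpha> X \<beta> Y \<in> T"
    and conj: "\<And>U X. unitary_mat n U \<Longrightarrow> X \<in> T \<Longrightarrow> conj_tuple U X \<in> T"
    and units: "\<And>j. j < k \<Longrightarrow> coord_tuple k n j (mat_unit n 0 0) \<in> T"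
  shows "T = tuples k n"
proof
  have coord: "coord_tuple k n j M \<in> T" if j: "j < k" and M: "M \<in> carrier_mat n n" for j M
  proof -
    let ?S = "{A \<in> carrier_mat n n. coord_tuple k n j A \<in> T}"
    have "unitarily_invariant_subspace n ?S"
      using lin conj by (auto simp: unitarily_invariant_subspace_def unitary_mat_def
          simp flip: lin_comb_coord_tuple conj_coord_tuple)
    then have "?S = carrier_mat n n"
      using units[OF j] by (intro unitarily_invariant_subspace_eq_carrier_mat) auto
    then show ?thesis using M by blast
  qed
  show "tuples k n \<subseteq> T"
  proof
    fix X assume X: "X \<in> tuples k n"
    define prefix where "prefix m = map (\<lambda>i. if i < m then X ! i else 0\<^sub>m n n) [0..<k]" for m
    have "prefix m \<in> T" if "m \<le> k" for m
      using that
    proof (induction m)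
      case 0
      have "prefix 0 = replicate k (0\<^sub>m n n)" by (simp add: prefix_def map_replicate_const)
      then show ?case using zero by simp
    next
      case (Suc m)
      have Xm: "X ! m \<in> carrier_mat n n" using X Suc.prems by (simp add: tuples_def)
      have "prefix (Suc m) = lin_comb_tuple 1 (prefix m) 1 (coord_tuple k n m (X ! m))"
        using X Suc.prems by (intro nth_equalityI) (auto simp: prefix_def lin_comb_tuple_def tuples_def)
      then show ?case using lin Suc coord[OF _ Xm] by simp
    qed
    moreover have "prefix k = X"
      using X by (intro nth_equalityI) (auto simp: prefix_def tuples_def)
    ultimately show "X \<in> T" by force
  qed
qed (use sub in blast)

definition lin_form :: "nat \<Rightarrow> (nat \<Rightarrow> complex) \<Rightarrow> nat \<Rightarrow> complex mat list \<Rightarrow> complex mat" where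
  "lin_form k a n X = mat n n (\<lambda>(r,c). \<Sum>j<k. a j * (X ! j $$ (r,c)))"

lemma lin_form_carrier [simp]: "lin_form k a n X \<in> carrier_mat n n"
  by (simp add: lin_form_def)

lemma index_lin_form [simp]:
  "r < n \<Longrightarrow> c < n \<Longrightarrow> lin_form k a n X $$ (r,c) = (\<Sum>j<k. a j * (X ! j $$ (r,c)))"
  "dim_row (lin_form k a n X) = n" "dim_col (lin_form k a n X) = n"
  by (simp_all add: lin_form_def)

lemma lin_form_lin_comb:
  assumes "X \<in> tuples k n" "Y \<in> tuples k n"
  shows "lin_form k a n (lin_comb_tuple \<alpha> X \<beta> Y) = \<alpha> \<cdot>\<^sub>m lin_form k a n X + \<beta> \<cdot>\<^sub>m lin_form k a n Y"
proof (rule eq_matI)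
  fix r c assume "r < dim_row (\<alpha> \<cdot>\<^sub>m lin_form k a n X + \<beta> \<cdot>\<^sub>m lin_form k a n Y)"
    "c < dim_col (\<alpha> \<cdot>\<^sub>m lin_form k a n X + \<beta> \<cdot>\<^sub>m lin_form k a n Y)"
  then have rc: "r < n" "c < n" by auto
  have "(\<Sum>j<k. a j * (lin_comb_tuple \<alpha> X \<beta> Y ! j $$ (r,c)))
      = (\<Sum>j<k. \<alpha> * (a j * X ! j $$ (r,c)) + \<beta> * (a j * Y ! j $$ (r,c)))"
  proof (rule sum.cong[OF refl])
    fix j assume "j \<in> {..<k}"
    then have "X ! j \<in> carrier_mat n n" "Y ! j \<in> carrier_mat n n" "length X = k" "length Y = k"
      using assms by (auto simp: tuples_def)
    then show "a j * (lin_comb_tuple \<alpha> X \<beta> Y ! j $$ (r,c))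
        = \<alpha> * (a j * X ! j $$ (r,c)) + \<beta> * (a j * Y ! j $$ (r,c))"
      using \<open>j \<in> {..<k}\<close> rc by (simp add: lin_comb_tuple_def algebra_simps)
  qed
  then show "lin_form k a n (lin_comb_tuple \<alpha> X \<beta> Y) $$ (r,c)
      = (\<alpha> \<cdot>\<^sub>m lin_form k a n X + \<beta> \<cdot>\<^sub>m lin_form k a n Y) $$ (r,c)"
    using rc by (simp add: sum.distrib sum_distrib_left)
qed auto

lemma lin_form_conj:
  assumes X: "X \<in> tuples k n" and U: "U \<in> carrier_mat n n"
  shows "lin_form k a n (conj_tuple U X) = adj U * lin_form k a n X * U"
proof (rule eq_matI)
  fix r c assume "r < dim_row (adj U * lin_form k a n X * U)" "c < dim_col (adj U * lin_form k a n X * U)"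
  then have rc: "r < n" "c < n" using U by auto
  have "lin_form k a n (conj_tuple U X) $$ (r,c) = (\<Sum>j<k. a j * (adj U * X ! j * U) $$ (r,c))"
    using X rc by (auto simp: conj_tuple_def tuples_def intro!: sum.cong)
  also have "\<dots> = (\<Sum>j<k. \<Sum>p<n. \<Sum>q<n. cnj (U $$ (p,r)) * (a j * X ! j $$ (p,q)) * U $$ (q,c))"
  proof (rule sum.cong[OF refl])
    fix j assume "j \<in> {..<k}"
    then have "X ! j \<in> carrier_mat n n" using X by (simp add: tuples_def)
    then show "a j * (adj U * X ! j * U) $$ (r,c)
        = (\<Sum>p<n. \<Sum>q<n. cnj (U $$ (p,r)) * (a j * X ! j $$ (p,q)) * U $$ (q,c))"
      by (simp only: index_conj_mat[OF U _ rc]) (simp add: sum_distrib_left algebra_simps)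
  qed
  also have "\<dots> = (\<Sum>p<n. \<Sum>q<n. cnj (U $$ (p,r)) * (\<Sum>j<k. a j * X ! j $$ (p,q)) * U $$ (q,c))"
    by (simp add: sum_distrib_left sum_distrib_right sum.swap[of _ "{..<k}"])
  also have "\<dots> = (adj U * lin_form k a n X * U) $$ (r,c)"
    by (simp only: index_conj_mat[OF U lin_form_carrier rc]) simp
  finally show "lin_form k a n (conj_tuple U X) $$ (r,c) = (adj U * lin_form k a n X * U) $$ (r,c)" .
qed (use U in auto)

lemma lin_form_dsum:
  assumes X: "X \<in> tuples k n" and Y: "Y \<in> tuples k m"
  shows "lin_form k a (n + m) (dsum_tuple X Y) = dsum (lin_form k a n X) (lin_form k a m Y)"
proof (rule eq_matI)
  fix r c assume "r < dim_row (dsum (lin_form k a n X) (lin_form k a m Y))"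
    "c < dim_col (dsum (lin_form k a n X) (lin_form k a m Y))"
  then have rc: "r < n + m" "c < n + m" by (auto simp: dsum_def)
  have "(\<Sum>j<k. a j * (dsum_tuple X Y ! j $$ (r,c)))
      = (\<Sum>j<k. if r < n \<and> c < n then a j * X ! j $$ (r,c)
          else if n \<le> r \<and> n \<le> c then a j * Y ! j $$ (r - n, c - n) else 0)"
  proof (rule sum.cong[OF refl])
    fix j assume "j \<in> {..<k}"
    then have "X ! j \<in> carrier_mat n n" "Y ! j \<in> carrier_mat m m" "length X = k" "length Y = k"
      using X Y by (auto simp: tuples_def)
    then show "a j * (dsum_tuple X Y ! j $$ (r,c))
        = (if r < n \<and> c < n then a j * X ! j $$ (r,c)
           else if n \<le> r \<and> n \<le> c then a j * Y ! j $$ (r - n, c - n) else 0)"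
      using \<open>j \<in> {..<k}\<close> rc by (simp add: dsum_tuple_def index_dsum)
  qed
  then show "lin_form k a (n + m) (dsum_tuple X Y) $$ (r,c) = dsum (lin_form k a n X) (lin_form k a m Y) $$ (r,c)"
    using rc by (cases "r < n \<and> c < n"; cases "n \<le> r \<and> n \<le> c")
      (auto simp: index_dsum[OF lin_form_carrier lin_form_carrier rc])
qed (auto simp: dsum_def)

definition smult_tuple :: "complex \<Rightarrow> complex mat list \<Rightarrow> complex mat list" where
  "smult_tuple t X = map (\<lambda>A. t \<cdot>\<^sub>m A) X"

lemma smult_tuple_tuples: "X \<in> tuples k n \<Longrightarrow> smult_tuple t X \<in> tuples k n"
  by (simp add: smult_tuple_def tuples_def)

lemma lin_comb_tuple_tuples:
  "X \<in> tuples k n \<Longrightarrow> Y \<in> tuples k n \<Longrightarrow> lin_comb_tuple \<alpha> X \<beta> Y \<in> tuples k n"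
  by (auto simp: lin_comb_tuple_def tuples_def)

lemma conj_tuple_tuples: "X \<in> tuples k n \<Longrightarrow> U \<in> carrier_mat n n \<Longrightarrow> conj_tuple U X \<in> tuples k n"
  by (auto simp: conj_tuple_def tuples_def)

lemma dsum_tuple_tuples: "X \<in> tuples k n \<Longrightarrow> Y \<in> tuples k m \<Longrightarrow> dsum_tuple X Y \<in> tuples k (n + m)"
  by (auto simp: dsum_tuple_def tuples_def dsum_def)

lemma smult_tuple_one: "X \<in> tuples k n \<Longrightarrow> smult_tuple 1 X = X"
  by (intro nth_equalityI) (auto simp: smult_tuple_def tuples_def)

lemma smult_tuple_replicate_zero: "smult_tuple t (replicate k (0\<^sub>m n n)) = replicate k (0\<^sub>m n n)"
  by (auto simp: smult_tuple_def)

lemma smult_tuple_as_lin_comb: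
  assumes "X \<in> tuples k n" "t \<noteq> 0"
  shows "smult_tuple u X = lin_comb_tuple (u / t) (smult_tuple t X) 0 (smult_tuple t X)"
  using assms by (intro nth_equalityI) (auto simp: smult_tuple_def lin_comb_tuple_def tuples_def)

lemma smult_tuple_lin_comb:
  assumes "X \<in> tuples k n" "Y \<in> tuples k n"
  shows "smult_tuple t (lin_comb_tuple \<alpha> X \<beta> Y)
       = lin_comb_tuple 1 (smult_tuple (t * \<alpha>) X) 1 (smult_tuple (t * \<beta>) Y)"
proof (rule nth_equalityI)
  fix i assume "i < length (smult_tuple t (lin_comb_tuple \<alpha> X \<beta> Y))"
  then have "i < k" "X ! i \<in> carrier_mat n n" "Y ! i \<in> carrier_mat n n" "length X = k" "length Y = k"
    using assms by (auto simp: smult_tuple_def lin_comb_tuple_def tuples_def)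
  then show "smult_tuple t (lin_comb_tuple \<alpha> X \<beta> Y) ! i
      = lin_comb_tuple 1 (smult_tuple (t * \<alpha>) X) 1 (smult_tuple (t * \<beta>) Y) ! i"
    by (auto simp: smult_tuple_def lin_comb_tuple_def algebra_simps)
qed (use assms in \<open>simp add: smult_tuple_def lin_comb_tuple_def tuples_def\<close>)

lemma conj_smult_mat:
  assumes "U \<in> carrier_mat n n" "A \<in> carrier_mat n n"
  shows "adj U * (t \<cdot>\<^sub>m A) * U = t \<cdot>\<^sub>m (adj U * A * U)"
proof -
  have "adj U * A \<in> carrier_mat n n" using assms by (simp add: mult_carrier_mat[of _ n n])
  then show ?thesis
    using assms by (simp add: mult_smult_distrib[of _ n n _ n] mult_smult_assoc_mat[of _ n n _ n])
qed

lemma smult_tuple_conj: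
  assumes "X \<in> tuples k n" "U \<in> carrier_mat n n"
  shows "smult_tuple t (conj_tuple U X) = conj_tuple U (smult_tuple t X)"
  using assms by (intro nth_equalityI) (auto simp: smult_tuple_def conj_tuple_def tuples_def conj_smult_mat)

lemma smult_tuple_dsum:
  assumes "X \<in> tuples k n" "Y \<in> tuples k m"
  shows "smult_tuple t (dsum_tuple X Y) = dsum_tuple (smult_tuple t X) (smult_tuple t Y)"
  using assms by (intro nth_equalityI) (auto simp: smult_tuple_def dsum_tuple_def tuples_def dsum_def)

lemma exists_nonzero_in_nhds_0:
  assumes "\<forall>\<^sub>F t in nhds (0 :: complex). P t"
  shows "\<exists>t. t \<noteq> 0 \<and> P t"
proof -
  have "\<forall>\<^sub>F t in at (0 :: complex). t \<noteq> 0 \<and> P t"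
    using assms by (auto simp: eventually_at_filter elim: eventually_mono)
  then show ?thesis by (rule eventually_happens'[OF at_neq_bot])
qed

locale linear_free_function =
  fixes k :: nat and D :: "nat \<Rightarrow> complex mat list set" and F :: "nat \<Rightarrow> complex mat list \<Rightarrow> complex mat"
  assumes free_set: "free_set k D" and nbhd_0: "contains_nbhd_0 k D"
    and free_function: "free_function k D F" and linear: "complex_linear_on D F"
begin

lemma D_tuples: "n \<ge> 1 \<Longrightarrow> X \<in> D n \<Longrightarrow> X \<in> tuples k n"
  using free_set by (auto simp: free_set_def)

lemma F_carrier: "n \<ge> 1 \<Longrightarrow> X \<in> D n \<Longrightarrow> F n X \<in> carrier_mat n n"
  using free_function by (auto simp: free_function_def)

lemma F_conj: "n \<ge> 1 \<Longrightarrow> unitary_mat n U \<Longrightarrow> X \<in> D n \<Longrightarrow> F n (conj_tuple U X) = adj U * F n X * U"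
  using free_function by (auto simp: free_function_def)

lemma F_dsum:
  "n \<ge> 1 \<Longrightarrow> m \<ge> 1 \<Longrightarrow> X \<in> D n \<Longrightarrow> Y \<in> D m \<Longrightarrow> F (n + m) (dsum_tuple X Y) = dsum (F n X) (F m Y)"
  using free_function by (auto simp: free_function_def)

lemma F_lin_comb:
  "n \<ge> 1 \<Longrightarrow> X \<in> D n \<Longrightarrow> Y \<in> D n \<Longrightarrow> lin_comb_tuple \<alpha> X \<beta> Y \<in> D n \<Longrightarrow>
     F n (lin_comb_tuple \<alpha> X \<beta> Y) = \<alpha> \<cdot>\<^sub>m F n X + \<beta> \<cdot>\<^sub>m F n Y"
  using linear by (auto simp: complex_linear_on_def)

lemma eventually_smult_tuple_in_D:
  assumes n: "n \<ge> 1" and X: "X \<in> tuples k n"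
  shows "\<forall>\<^sub>F t in nhds 0. smult_tuple (t * \<alpha>) X \<in> D n"
proof -
  obtain \<delta> where \<delta>: "\<delta> > 0"
    and ball: "\<And>Y. Y \<in> tuples k n \<Longrightarrow> (\<forall>i<k. \<forall>r<n. \<forall>c<n. cmod (Y ! i $$ (r,c)) < \<delta>) \<Longrightarrow> Y \<in> D n"
    using nbhd_0 n by (auto simp: contains_nbhd_0_def)
  have "\<forall>\<^sub>F t in nhds 0. cmod (t * \<alpha> * X ! i $$ (r,c)) < \<delta>" for i r c
  proof -
    have "((\<lambda>t. cmod (t * \<alpha> * X ! i $$ (r,c))) \<longlongrightarrow> 0) (nhds 0)"
      by (auto intro!: tendsto_eq_intros filterlim_ident)
    then show ?thesis using \<delta> by (rule order_tendstoD(2))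
  qed
  then have "\<forall>\<^sub>F t in nhds 0. \<forall>(i,r,c)\<in>{..<k} \<times> {..<n} \<times> {..<n}. cmod (t * \<alpha> * X ! i $$ (r,c)) < \<delta>"
    by (intro eventually_ball_finite) auto
  then show ?thesis
  proof (rule eventually_mono)
    fix t assume "\<forall>(i,r,c)\<in>{..<k} \<times> {..<n} \<times> {..<n}. cmod (t * \<alpha> * X ! i $$ (r,c)) < \<delta>"
    then show "smult_tuple (t * \<alpha>) X \<in> D n"
      using X by (intro ball smult_tuple_tuples) (auto simp: smult_tuple_def tuples_def)
  qed
qed

definition agrees :: "(nat \<Rightarrow> complex) \<Rightarrow> nat \<Rightarrow> complex mat list \<Rightarrow> bool" where
  "agrees a n X \<longleftrightarrow> F n X = lin_form k a n X"

lemma agrees_lin_comb: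
  assumes "n \<ge> 1" "X \<in> D n" "Y \<in> D n" "lin_comb_tuple \<alpha> X \<beta> Y \<in> D n" "agrees a n X" "agrees a n Y"
  shows "agrees a n (lin_comb_tuple \<alpha> X \<beta> Y)"
  using assms by (simp add: agrees_def F_lin_comb lin_form_lin_comb D_tuples)

lemma agrees_conj:
  assumes "n \<ge> 1" "unitary_mat n U" "X \<in> D n" "agrees a n X"
  shows "agrees a n (conj_tuple U X)"
  using assms by (simp add: agrees_def F_conj lin_form_conj D_tuples unitary_mat_def)

lemma agrees_dsum:
  assumes "n \<ge> 1" "m \<ge> 1" "X \<in> D n" "Y \<in> D m" "agrees a n X" "agrees a m Y"
  shows "agrees a (n + m) (dsum_tuple X Y)"
  using assms by (simp add: agrees_def F_dsum lin_form_dsum D_tuples)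

lemma agrees_zero:
  assumes n: "n \<ge> 1" and Z: "replicate k (0\<^sub>m n n) \<in> D n"
  shows "agrees a n (replicate k (0\<^sub>m n n))"
proof -
  let ?Z = "replicate k (0\<^sub>m n n)"
  have lin: "lin_comb_tuple 0 ?Z 0 ?Z = ?Z" by (simp add: lin_comb_tuple_def map2_map_map[symmetric])
  have "F n ?Z = 0 \<cdot>\<^sub>m F n ?Z + 0 \<cdot>\<^sub>m F n ?Z"
    using F_lin_comb[OF n Z Z, of 0 0] lin Z by simp
  also have "\<dots> = 0\<^sub>m n n"
    using F_carrier[OF n Z] by (intro eq_matI) auto
  also have "\<dots> = lin_form k a n ?Z"
    by (rule eq_matI) auto
  finally show ?thesis by (simp add: agrees_def)
qed

definition agrees_on_ray :: "(nat \<Rightarrow> complex) \<Rightarrow> nat \<Rightarrow> complex mat list \<Rightarrow> bool" where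
  "agrees_on_ray a n X \<longleftrightarrow> (\<forall>t. smult_tuple t X \<in> D n \<longrightarrow> agrees a n (smult_tuple t X))"

lemma agrees_on_rayI:
  assumes n: "n \<ge> 1" and X: "X \<in> tuples k n" and t: "t \<noteq> 0"
    and tX: "smult_tuple t X \<in> D n" "agrees a n (smult_tuple t X)"
  shows "agrees_on_ray a n X"
  unfolding agrees_on_ray_def
proof (intro allI impI)
  fix u assume uX: "smult_tuple u X \<in> D n"
  have "smult_tuple u X = lin_comb_tuple (u / t) (smult_tuple t X) 0 (smult_tuple t X)"
    by (rule smult_tuple_as_lin_comb[OF X t])
  then show "agrees a n (smult_tuple u X)"
    using agrees_lin_comb[OF n tX(1) tX(1) _ tX(2) tX(2)] uX by simp
qed

lemma agrees_on_ray_eventually: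
  assumes n: "n \<ge> 1" and X: "X \<in> tuples k n"
    and ev: "\<forall>\<^sub>F t in nhds 0. smult_tuple t X \<in> D n \<longrightarrow> agrees a n (smult_tuple t X)"
  shows "agrees_on_ray a n X"
proof -
  have "\<forall>\<^sub>F t in nhds 0. smult_tuple t X \<in> D n \<and> agrees a n (smult_tuple t X)"
    using eventually_conj[OF eventually_smult_tuple_in_D[OF n X, of 1] ev] by (rule eventually_mono) simp
  then have "\<exists>t. t \<noteq> 0 \<and> smult_tuple t X \<in> D n \<and> agrees a n (smult_tuple t X)"
    by (rule exists_nonzero_in_nhds_0)
  then show ?thesis using agrees_on_rayI[OF n X] by blast
qed

lemma agrees_on_ray_lin_comb:
  assumes n: "n \<ge> 1" and X: "X \<in> tuples k n" and Y: "Y \<in> tuples k n"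
    and "agrees_on_ray a n X" "agrees_on_ray a n Y"
  shows "agrees_on_ray a n (lin_comb_tuple \<alpha> X \<beta> Y)"
proof (rule agrees_on_ray_eventually[OF n])
  show "lin_comb_tuple \<alpha> X \<beta> Y \<in> tuples k n"
    using X Y by (rule lin_comb_tuple_tuples)
  show "\<forall>\<^sub>F t in nhds 0. smult_tuple t (lin_comb_tuple \<alpha> X \<beta> Y) \<in> D n \<longrightarrow>
      agrees a n (smult_tuple t (lin_comb_tuple \<alpha> X \<beta> Y))"
    using eventually_conj[OF eventually_smult_tuple_in_D[OF n X] eventually_smult_tuple_in_D[OF n Y]]
  proof (rule eventually_mono)
    fix t assume "smult_tuple (t * \<alpha>) X \<in> D n \<and> smult_tuple (t * \<beta>) Y \<in> D n"
    then show "smult_tuple t (lin_comb_tuple \<alpha> X \<beta> Y) \<in> D n \<longrightarrow>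
        agrees a n (smult_tuple t (lin_comb_tuple \<alpha> X \<beta> Y))"
      using assms by (auto simp: smult_tuple_lin_comb agrees_on_ray_def intro: agrees_lin_comb)
  qed
qed

lemma agrees_on_ray_conj:
  assumes n: "n \<ge> 1" and X: "X \<in> tuples k n" and U: "unitary_mat n U" and "agrees_on_ray a n X"
  shows "agrees_on_ray a n (conj_tuple U X)"
proof (rule agrees_on_ray_eventually[OF n])
  have U_carrier: "U \<in> carrier_mat n n" using U by (simp add: unitary_mat_def)
  show "conj_tuple U X \<in> tuples k n"
    using X U_carrier by (rule conj_tuple_tuples)
  show "\<forall>\<^sub>F t in nhds 0. smult_tuple t (conj_tuple U X) \<in> D n \<longrightarrow> agrees a n (smult_tuple t (conj_tuple U X))"
    using eventually_smult_tuple_in_D[OF n X, of 1]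
  proof (rule eventually_mono)
    fix t assume "smult_tuple (t * 1) X \<in> D n"
    then show "smult_tuple t (conj_tuple U X) \<in> D n \<longrightarrow> agrees a n (smult_tuple t (conj_tuple U X))"
      using assms U_carrier by (auto simp: smult_tuple_conj agrees_on_ray_def intro: agrees_conj)
  qed
qed

lemma agrees_on_ray_dsum:
  assumes n: "n \<ge> 1" and m: "m \<ge> 1" and X: "X \<in> tuples k n" and Y: "Y \<in> tuples k m"
    and "agrees_on_ray a n X" "agrees_on_ray a m Y"
  shows "agrees_on_ray a (n + m) (dsum_tuple X Y)"
proof (rule agrees_on_ray_eventually)
  show "dsum_tuple X Y \<in> tuples k (n + m)"
    using X Y by (rule dsum_tuple_tuples)
  show "\<forall>\<^sub>F t in nhds 0. smult_tuple t (dsum_tuple X Y) \<in> D (n + m) \<longrightarrow>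
      agrees a (n + m) (smult_tuple t (dsum_tuple X Y))"
    using eventually_conj[OF eventually_smult_tuple_in_D[OF n X, of 1] eventually_smult_tuple_in_D[OF m Y, of 1]]
  proof (rule eventually_mono)
    fix t assume "smult_tuple (t * 1) X \<in> D n \<and> smult_tuple (t * 1) Y \<in> D m"
    then show "smult_tuple t (dsum_tuple X Y) \<in> D (n + m) \<longrightarrow> agrees a (n + m) (smult_tuple t (dsum_tuple X Y))"
      using assms by (auto simp: smult_tuple_dsum agrees_on_ray_def intro: agrees_dsum)
  qed
qed (use n in simp)

lemma agrees_on_ray_zero:
  assumes "n \<ge> 1"
  shows "agrees_on_ray a n (replicate k (0\<^sub>m n n))"
  using assms agrees_zero by (simp add: agrees_on_ray_def smult_tuple_replicate_zero)

lemma agrees_on_ray_coord_mat_unit_00: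
  assumes units: "\<And>j. j < k \<Longrightarrow> agrees_on_ray a 1 (coord_tuple k 1 j (1\<^sub>m 1))"
    and n: "n \<ge> 1" and j: "j < k"
  shows "agrees_on_ray a n (coord_tuple k n j (mat_unit n 0 0))"
proof (cases "n = 1")
  case True
  have "mat_unit 1 0 0 = 1\<^sub>m 1" by (rule eq_matI) auto
  then show ?thesis using True units[OF j] by simp
next
  case False
  define m where "m = n - 1"
  have m: "n = 1 + m" "m \<ge> 1" using n False by (auto simp: m_def)
  have "mat_unit n 0 0 = dsum (1\<^sub>m 1) (0\<^sub>m m m)"
    using m by (auto simp: dsum_def)
  then have "coord_tuple k n j (mat_unit n 0 0) = dsum_tuple (coord_tuple k 1 j (1\<^sub>m 1)) (replicate k (0\<^sub>m m m))"
    using m dsum_coord_tuple[of "1\<^sub>m 1" 1 "0\<^sub>m m m" m k j] by (simp add: coord_tuple_zero)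
  moreover have "agrees_on_ray a (1 + m) (dsum_tuple (coord_tuple k 1 j (1\<^sub>m 1)) (replicate k (0\<^sub>m m m)))"
    using m units[OF j] agrees_on_ray_zero
    by (intro agrees_on_ray_dsum) (auto simp: coord_tuple_tuples tuples_def)
  ultimately show ?thesis using m by simp
qed

lemma agrees_on_ray_tuples:
  assumes units: "\<And>j. j < k \<Longrightarrow> agrees_on_ray a 1 (coord_tuple k 1 j (1\<^sub>m 1))"
    and n: "n \<ge> 1" and X: "X \<in> tuples k n"
  shows "agrees_on_ray a n X"
proof -
  have "{X \<in> tuples k n. agrees_on_ray a n X} = tuples k n"
  proof (rule tuple_subspace_eq_tuples)
    show "replicate k (0\<^sub>m n n) \<in> {X \<in> tuples k n. agrees_on_ray a n X}"
      using agrees_on_ray_zero[OF n] coord_tuple_tuples[of "0\<^sub>m n n" n k 0] by (simp add: coord_tuple_zero)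
    show "coord_tuple k n j (mat_unit n 0 0) \<in> {X \<in> tuples k n. agrees_on_ray a n X}" if "j < k" for j
      using agrees_on_ray_coord_mat_unit_00[OF units n that] by (simp add: coord_tuple_tuples)
    show "lin_comb_tuple \<alpha> X \<beta> Y \<in> {X \<in> tuples k n. agrees_on_ray a n X}"
      if "X \<in> {X \<in> tuples k n. agrees_on_ray a n X}" "Y \<in> {X \<in> tuples k n. agrees_on_ray a n X}"
      for X Y \<alpha> \<beta>
      using that n by (auto intro: lin_comb_tuple_tuples agrees_on_ray_lin_comb)
    show "conj_tuple U X \<in> {X \<in> tuples k n. agrees_on_ray a n X}"
      if "unitary_mat n U" "X \<in> {X \<in> tuples k n. agrees_on_ray a n X}" for U X
      using that n by (auto intro: conj_tuple_tuples agrees_on_ray_conj simp: unitary_mat_def)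
  qed auto
  then show ?thesis using X by blast
qed

lemma agrees_on_ray_imp_eq:
  assumes "n \<ge> 1" "X \<in> D n" "agrees_on_ray a n X"
  shows "F n X = lin_form k a n X"
proof -
  have "smult_tuple 1 X = X" using smult_tuple_one D_tuples assms by blast
  then show ?thesis using assms(2,3) unfolding agrees_on_ray_def agrees_def by metis
qed

lemma exists_coefficients_dim_1: "\<exists>a. \<forall>j<k. agrees_on_ray a 1 (coord_tuple k 1 j (1\<^sub>m 1))"
proof -
  let ?E = "\<lambda>j. coord_tuple k 1 j (1\<^sub>m 1)"
  have "\<forall>\<^sub>F t in nhds 0. \<forall>j\<in>{..<k}. smult_tuple (t * 1) (?E j) \<in> D 1"
    by (intro eventually_ball_finite ballI eventually_smult_tuple_in_D coord_tuple_tuples) auto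
  then have "\<exists>t. t \<noteq> 0 \<and> (\<forall>j\<in>{..<k}. smult_tuple (t * 1) (?E j) \<in> D 1)"
    by (rule exists_nonzero_in_nhds_0)
  then obtain t where t: "t \<noteq> 0" and tE: "\<And>j. j < k \<Longrightarrow> smult_tuple t (?E j) \<in> D 1"
    by auto
  define a where "a j = F 1 (smult_tuple t (?E j)) $$ (0,0) / t" for j
  have "agrees a 1 (smult_tuple t (?E j))" if j: "j < k" for j
  proof -
    have "F 1 (smult_tuple t (?E j)) \<in> carrier_mat 1 1" using F_carrier tE[OF j] by simp
    moreover have "(\<Sum>i<k. a i * smult_tuple t (?E j) ! i $$ (0,0)) = (\<Sum>i<k. if i = j then a j * t else 0)"
      by (intro sum.cong refl) (auto simp: smult_tuple_def)
    moreover have "\<dots> = a j * t" using j by simp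
    ultimately show ?thesis
      using t by (auto simp: agrees_def a_def)
  qed
  then have "agrees_on_ray a 1 (?E j)" if "j < k" for j
    using that t tE by (intro agrees_on_rayI[of 1 _ t]) (auto intro: coord_tuple_tuples)
  then show ?thesis by blast
qed

end

theorem mainTheorem12:
  fixes k :: nat
    and D :: "nat \<Rightarrow> complex mat list set"
    and F :: "nat \<Rightarrow> complex mat list \<Rightarrow> complex mat"
  assumes "free_set k D"
    and "contains_nbhd_0 k D"
    and "free_function k D F"
    and "complex_linear_on D F"
  shows "\<exists>a :: nat \<Rightarrow> complex. \<forall>n\<ge>1. \<forall>X\<in>D n.
           F n X = mat n n (\<lambda>(r,c). \<Sum>j<k. a j * (X ! j $$ (r,c)))"
proof -
  interpret linear_free_function k D F
    using assms by unfold_locales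
  obtain a where a: "\<And>j. j < k \<Longrightarrow> agrees_on_ray a 1 (coord_tuple k 1 j (1\<^sub>m 1))"
    using exists_coefficients_dim_1 by blast
  have "F n X = lin_form k a n X" if "n \<ge> 1" "X \<in> D n" for n X
    using that agrees_on_ray_tuples[OF a that(1) D_tuples[OF that]] by (rule agrees_on_ray_imp_eq)
  then show ?thesis unfolding lin_form_def by blast
qed

end
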